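(* Let $\mathcal{V}$ be a finite vocabulary and let $q$ and $p$ be probability distributions on $\mathcal{V}$ (the draft and target next-token distributions at some step, conditioned on a fixed prefix). Fix a constant $0 < w \le 1$ and define the ensemble distribution $\nu(x) = w\,p(x) + (1-w)\,q(x)$ for $x \in \mathcal{V}$. Consider the verification scheme in which a draft token $\tilde{x} \sim q$ is sampled, and then accepted with probability $b_{\nu}(\tilde{x}) = \min\{1, \nu(\tilde{x})/q(\tilde{x})\}$; if rejected, a replacement token is drawn from the fallback distribution $P_{\nu}(x) = \frac{[\nu(x)-q(x)]_+}{\sum_{x'} [\nu(x')-q(x')]_+}$. Then \[ \mathbb{P}_{\nu}(\mathrm{reject}) + \mathrm{TV}(\nu, p) = \mathrm{TV}(q, p), \] where $\mathbb{P}_{\nu}(\mathrm{reject}) = \sum_{x\in\mathcal{V}} q(x)\bigl(1 - b_{\nu}(x)\bigr)$ is the probability that the draft token $\tilde{x}\sim q$ is rejected. In this sense the pair $(\nu, P_\nu)$ attains the Pareto front of the tradeoff between rejection probability and distributional bias.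
   Context: $\mathrm{TV}(\mu_1,\mu_2) = \frac12\sum_{x\in\mathcal{V}} |\mu_1(x)-\mu_2(x)|$ denotes total variation distance between distributions on $\mathcal{V}$, and $[a]_+ = \max\{a,0\}$. The ratio $\nu(x)/q(x)$ is only needed for $x$ with $q(x)>0$ (draft tokens are sampled from $q$). *)

theory Defs
  imports Complex_Main
begin

definition is_distribution :: "('a::finite \<Rightarrow> real) \<Rightarrow> bool" where
  "is_distribution \<mu> \<longleftrightarrow> (\<forall>x. 0 \<le> \<mu> x) \<and> (\<Sum>x\<in>UNIV. \<mu> x) = 1"

definition TV :: "('a::finite \<Rightarrow> real) \<Rightarrow> ('a \<Rightarrow> real) \<Rightarrow> real" where
  "TV \<mu>1 \<mu>2 = (1/2) * (\<Sum>x\<in>UNIV. \<bar>\<mu>1 x - \<mu>2 x\<bar>)"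

definition ensemble :: "real \<Rightarrow> ('a \<Rightarrow> real) \<Rightarrow> ('a \<Rightarrow> real) \<Rightarrow> 'a \<Rightarrow> real" where
  "ensemble w p q x = w * p x + (1 - w) * q x"

(* acceptance probability b_nu(x) = min{1, nu(x)/q(x)}; only meaningful for q x > 0 *)
definition accept_prob :: "('a \<Rightarrow> real) \<Rightarrow> ('a \<Rightarrow> real) \<Rightarrow> 'a \<Rightarrow> real" where
  "accept_prob \<nu> q x = min 1 (\<nu> x / q x)"

definition fallback :: "('a::finite \<Rightarrow> real) \<Rightarrow> ('a \<Rightarrow> real) \<Rightarrow> 'a \<Rightarrow> real" where
  "fallback \<nu> q x = max (\<nu> x - q x) 0 / (\<Sum>x'\<in>UNIV. max (\<nu> x' - q x') 0)"

definition reject_prob :: "('a::finite \<Rightarrow> real) \<Rightarrow> ('a \<Rightarrow> real) \<Rightarrow> real" where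
  "reject_prob \<nu> q = (\<Sum>x\<in>{x. q x > 0}. q x * (1 - accept_prob \<nu> q x))"

end

theory Submission
  imports Defs
begin

text \<open>A draft token x is rejected with probability mass max(q x - \<nu> x, 0), and
  q - \<nu> = w (q - p), so the rejection probability is w TV(q, p), since the total
  variation between two distributions is the sum of the positive parts of their difference.
  On the other hand \<nu> - p = (1 - w) (q - p), so TV(\<nu>, p) = (1 - w) TV(q, p).\<close>

lemma TV_eq_sum_pos_part:
  fixes \<mu>1 \<mu>2 :: "'a::finite \<Rightarrow> real"
  assumes "(\<Sum>x\<in>UNIV. \<mu>1 x) = (\<Sum>x\<in>UNIV. \<mu>2 x)"
  shows "TV \<mu>1 \<mu>2 = (\<Sum>x\<in>UNIV. max 0 (\<mu>1 x - \<mu>2 x))"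
proof -
  have "\<And>x. \<bar>\<mu>1 x - \<mu>2 x\<bar> = 2 * max 0 (\<mu>1 x - \<mu>2 x) - (\<mu>1 x - \<mu>2 x)"
    by (auto simp: max_def)
  then have "(\<Sum>x\<in>UNIV. \<bar>\<mu>1 x - \<mu>2 x\<bar>)
      = 2 * (\<Sum>x\<in>UNIV. max 0 (\<mu>1 x - \<mu>2 x)) - ((\<Sum>x\<in>UNIV. \<mu>1 x) - (\<Sum>x\<in>UNIV. \<mu>2 x))"
    by (simp add: sum_subtractf sum_distrib_left)
  with assms show ?thesis
    by (simp add: TV_def)
qed

lemma TV_scaled_difference:
  fixes \<nu> \<mu>1 \<mu>2 :: "'a::finite \<Rightarrow> real"
  assumes "\<And>x. \<nu> x - \<mu>2 x = c * (\<mu>1 x - \<mu>2 x)" and "0 \<le> c"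
  shows "TV \<nu> \<mu>2 = c * TV \<mu>1 \<mu>2"
  using assms by (simp add: TV_def abs_mult sum_distrib_left)

lemma ensemble_minus_target: "ensemble w p q x - p x = (1 - w) * (q x - p x)"
  by (simp add: ensemble_def algebra_simps)

lemma draft_minus_ensemble: "q x - ensemble w p q x = w * (q x - p x)"
  by (simp add: ensemble_def algebra_simps)

lemma is_distribution_ensemble:
  assumes "is_distribution p" and "is_distribution q" and "0 \<le> w" and "w \<le> 1"
  shows "is_distribution (ensemble w p q)"
  using assms
  by (auto simp: is_distribution_def ensemble_def sum.distrib sum_distrib_left[symmetric])

lemma rejection_mass:
  assumes "0 < q x"
  shows "q x * (1 - accept_prob \<nu> q x) = max 0 (q x - \<nu> x)"
  using assms by (auto simp: accept_prob_def min_def max_def field_simps)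

lemma reject_prob_eq_sum_pos_part:
  fixes \<nu> q :: "'a::finite \<Rightarrow> real"
  assumes "\<And>x. 0 \<le> q x" and "\<And>x. 0 \<le> \<nu> x"
  shows "reject_prob \<nu> q = (\<Sum>x\<in>UNIV. max 0 (q x - \<nu> x))"
proof -
  have "reject_prob \<nu> q = (\<Sum>x\<in>{x. 0 < q x}. max 0 (q x - \<nu> x))"
    unfolding reject_prob_def by (rule sum.cong) (auto simp: rejection_mass)
  also have "\<dots> = (\<Sum>x\<in>UNIV. max 0 (q x - \<nu> x))"
  proof (rule sum.mono_neutral_left)
    show "\<forall>x\<in>UNIV - {x. 0 < q x}. max 0 (q x - \<nu> x) = 0"
      using assms by (auto simp: max_def) (meson antisym not_less order_trans)
  qed auto
  finally show ?thesis .
qed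

theorem proposition1:
  fixes q p :: "'a::finite \<Rightarrow> real" and w :: real
  assumes "is_distribution q" and "is_distribution p"
    and "0 < w" and "w \<le> 1"
  shows "reject_prob (ensemble w p q) q + TV (ensemble w p q) p = TV q p"
proof -
  have "is_distribution (ensemble w p q)"
    using assms by (simp add: is_distribution_ensemble)
  then have "reject_prob (ensemble w p q) q = (\<Sum>x\<in>UNIV. w * max 0 (q x - p x))"
    using assms(1,3)
    by (simp add: is_distribution_def reject_prob_eq_sum_pos_part draft_minus_ensemble
        max_mult_distrib_left)
  also have "\<dots> = w * TV q p"
    using assms(1,2) by (simp add: is_distribution_def TV_eq_sum_pos_part sum_distrib_left)
  finally have "reject_prob (ensemble w p q) q = w * TV q p" .
  moreover have "TV (ensemble w p q) p = (1 - w) * TV q p"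
    using assms(4) by (simp add: TV_scaled_difference ensemble_minus_target)
  ultimately show ?thesis
    by (simp add: algebra_simps)
qed

end
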